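(* In the D-RR setting under the strongly convex assumptions, suppose that for all $t$ $$\alpha_t\le\sqrt{\frac{2-\rho_w^2}{24\rho_w^2(5-\rho_w^2)}}\,\frac{1-\rho_w^2}{L}$$ (the right-hand side being $+\infty$ if $\rho_w=0$). Then for all $t\ge0$ and $\ell\in\{0,\dots,m-1\}$, $$\mathbb{E}\|\mathbf{x}_t^{\ell+1}-\mathbf 1(\bar x_t^{\ell+1})^\intercal\|^2\le\frac{1+\rho_w^2}{2}\mathbb{E}\|\mathbf{x}_t^{\ell}-\mathbf 1(\bar x_t^{\ell})^\intercal\|^2+\frac{30\alpha_t^2nL^2}{1-\rho_w^2}\mathbb{E}\|\bar x_t^\ell-\bar x_*^\ell\|^2+\frac{15n\rho_w^2\alpha_t^2}{1-\rho_w^2}\big(\sigma_*^2+2L\sigma^2_{\mathrm{shuffle}}\big).$$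
   Context: D-RR setting. Let $n,m,p\ge1$ be integers and $[k]=\{1,\dots,k\}$. For $i\in[n]$, $\ell\in[m]$ let $f_{i,\ell}:\mathbb{R}^p\to\mathbb{R}$ be differentiable; $f_i:=\frac1m\sum_{\ell=1}^m f_{i,\ell}$, $f:=\frac1n\sum_{i=1}^n f_i$. Let $W=(w_{ij})\in\mathbb{R}^{n\times n}$ be nonnegative, symmetric, with $W\mathbf 1=\mathbf 1$, compliant with an undirected connected graph on $[n]$ (for $i\ne j$, $w_{ij}>0$ iff $\{i,j\}$ is an edge); $\rho_w$ is the spectral norm of $W-\frac1n\mathbf 1\mathbf 1^\intercal$ (so $\rho_w<1$). The D-RR algorithm: given deterministic initial points $x_{i,0}\in\mathbb{R}^p$ and stepsizes $\alpha_t>0$, at each epoch $t=0,1,\dots$ each agent $i$ draws a permutation $(\pi^i_0,\dots,\pi^i_{m-1})$ of $[m]$ uniformly at random, independently across agents and epochs; sets $x^0_{i,t}=x_{i,t}$; for $\ell=0,\dots,m-1$ sets $x^{\ell+1}_{i,t}=\sum_{j=1}^n w_{ij}\big(x^\ell_{j,t}-\alpha_t\nabla f_{j,\pi^j_\ell}(x^\ell_{j,t})\big)$; sets $x_{i,t+1}=x^m_{i,t}$. Notation: $\mathbf{x}_t^\ell\in\mathbb{R}^{n\times p}$ has $i$-th row $(x^\ell_{i,t})^\intercal$; $\bar x_t^\ell=\frac1n\sum_i x^\ell_{i,t}$; $\mathbf 1(\bar x_t^\ell)^\intercal$ is the $n\times p$ matrix all of whose rows equal $(\bar x_t^\ell)^\intercal$;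 $\|\cdot\|$ is Euclidean/Frobenius norm; $\mathbb{E}$ is expectation over all permutations. Strongly convex assumptions: each $f_{i,\ell}$ is $\mu$-strongly convex with $L$-Lipschitz gradient ($0<\mu\le L$); $x^*$ is the unique minimizer of $f$; $\sigma_*^2:=\frac{1}{mn}\sum_{i,\ell}\|\nabla f_{i,\ell}(x^* )\|^2$. For epoch $t$ define $\bar x_*^\ell:=x^*-\alpha_t\sum_{k=0}^{\ell-1}\frac1n\sum_{i=1}^n\nabla f_{i,\pi^i_k}(x^* )$ ($\ell=0,\dots,m$), $\bar s_\ell:=\frac1n\sum_i f_{i,\pi^i_\ell}$, and $\sigma^2_{\mathrm{shuffle}}:=\max_{\ell=0,\dots,m-1}\mathbb{E}\big[\bar s_\ell(\bar x_*^\ell)-\bar s_\ell(x^* )-\langle\nabla\bar s_\ell(x^* ),\bar x_*^\ell-x^*\rangle\big]$. *)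

theory Defs
  imports "HOL-Analysis.Analysis" "HOL-Probability.Probability"
begin

definition spectral_norm :: "real ^'n ^'n \<Rightarrow> real" where
  "spectral_norm M = onorm (\<lambda>v. M *v v)"

definition rho_w :: "real ^'n::finite ^'n \<Rightarrow> real" where
  "rho_w W = spectral_norm (W - (\<chi> i j. 1 / real CARD('n)))"

text \<open>W is a nonnegative, symmetric, row-stochastic matrix compliant with an undirected
  connected graph: the graph is the one with edges {i,j} (i \<noteq> j) exactly when w_ij > 0,
  and this graph must be connected.\<close>
definition mixing_matrix :: "real ^'n::finite ^'n \<Rightarrow> bool" where
  "mixing_matrix W \<longleftrightarrow>
     (\<forall>i j. 0 \<le> W $ i $ j) \<and> transpose W = W \<and> W *v (vec 1) = vec 1 \<and>
     (\<forall>i j. (i, j) \<in> {(a, b). a \<noteq> b \<and> 0 < W $ a $ b}\<^sup>*)"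

definition strongly_convex_on :: "real \<Rightarrow> ('a::real_normed_vector \<Rightarrow> real) \<Rightarrow> bool" where
  "strongly_convex_on \<mu> f \<longleftrightarrow>
     (\<forall>x y. \<forall>u::real. 0 \<le> u \<and> u \<le> 1 \<longrightarrow>
        f (u *\<^sub>R x + (1 - u) *\<^sub>R y) \<le> u * f x + (1 - u) * f y - \<mu> / 2 * u * (1 - u) * (norm (x - y))\<^sup>2)"

text \<open>Agents are the elements of the finite type 'n; component functions are indexed by
  l \<in> {..<m} (i.e. 0-based: index l stands for l+1 in [m]). g i l is the gradient of f_{i,l}.
  A permutation of agent i in an epoch is a function P i :: nat \<Rightarrow> nat permuting {..<m};
  pi^i_ell = P i ell.\<close>

definition drr_step ::
  "real ^'n::finite ^'n \<Rightarrow> ('n \<Rightarrow> nat \<Rightarrow> 'a::real_vector \<Rightarrow> 'a) \<Rightarrow> real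
     \<Rightarrow> ('n \<Rightarrow> nat \<Rightarrow> nat) \<Rightarrow> nat \<Rightarrow> ('n \<Rightarrow> 'a) \<Rightarrow> ('n \<Rightarrow> 'a)" where
  "drr_step W g \<alpha> P r X = (\<lambda>i. \<Sum>j\<in>UNIV. W $ i $ j *\<^sub>R (X j - \<alpha> *\<^sub>R g j (P j r) (X j)))"

text \<open>Inner iterate: drr_inner W g alpha P X ell = x^ell_t when X = x_t.\<close>
primrec drr_inner ::
  "real ^'n::finite ^'n \<Rightarrow> ('n \<Rightarrow> nat \<Rightarrow> 'a::real_vector \<Rightarrow> 'a) \<Rightarrow> real
     \<Rightarrow> ('n \<Rightarrow> nat \<Rightarrow> nat) \<Rightarrow> ('n \<Rightarrow> 'a) \<Rightarrow> nat \<Rightarrow> ('n \<Rightarrow> 'a)" where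
  "drr_inner W g \<alpha> P X 0 = X"
| "drr_inner W g \<alpha> P X (Suc r) = drr_step W g \<alpha> P r (drr_inner W g \<alpha> P X r)"

primrec drr_outer ::
  "real ^'n::finite ^'n \<Rightarrow> ('n \<Rightarrow> nat \<Rightarrow> 'a::real_vector \<Rightarrow> 'a) \<Rightarrow> nat \<Rightarrow> (nat \<Rightarrow> real)
     \<Rightarrow> (nat \<Rightarrow> 'n \<Rightarrow> nat \<Rightarrow> nat) \<Rightarrow> ('n \<Rightarrow> 'a) \<Rightarrow> nat \<Rightarrow> ('n \<Rightarrow> 'a)" where
  "drr_outer W g m \<alpha> \<omega> x0 0 = x0"
| "drr_outer W g m \<alpha> \<omega> x0 (Suc t) = drr_inner W g (\<alpha> t) (\<omega> t) (drr_outer W g m \<alpha> \<omega> x0 t) m"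

definition drr_iter ::
  "real ^'n::finite ^'n \<Rightarrow> ('n \<Rightarrow> nat \<Rightarrow> 'a::real_vector \<Rightarrow> 'a) \<Rightarrow> nat \<Rightarrow> (nat \<Rightarrow> real)
     \<Rightarrow> ('n \<Rightarrow> 'a) \<Rightarrow> (nat \<Rightarrow> 'n \<Rightarrow> nat \<Rightarrow> nat) \<Rightarrow> nat \<Rightarrow> nat \<Rightarrow> ('n \<Rightarrow> 'a)" where
  "drr_iter W g m \<alpha> x0 \<omega> t r = drr_inner W g (\<alpha> t) (\<omega> t) (drr_outer W g m \<alpha> \<omega> x0 t) r"

definition agent_avg :: "('n::finite \<Rightarrow> 'a::real_vector) \<Rightarrow> 'a" where
  "agent_avg X = (1 / real CARD('n)) *\<^sub>R (\<Sum>i\<in>UNIV. X i)"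

text \<open>Squared Frobenius norm of x - 1 xbar^T.\<close>
definition consensus_err :: "('n::finite \<Rightarrow> 'a::real_normed_vector) \<Rightarrow> real" where
  "consensus_err X = (\<Sum>i\<in>UNIV. (norm (X i - agent_avg X))\<^sup>2)"

text \<open>The uniform distribution on this finite set is exactly independent uniform
  permutations across agents and epochs; later epochs do not influence epoch-t quantities.\<close>
definition perm_space :: "nat \<Rightarrow> nat \<Rightarrow> (nat \<Rightarrow> 'n \<Rightarrow> nat \<Rightarrow> nat) set" where
  "perm_space m t = PiE {..t} (\<lambda>_. PiE UNIV (\<lambda>_. {\<sigma>. \<sigma> permutes {..<m}}))"

definition Exp :: "nat \<Rightarrow> nat \<Rightarrow> ((nat \<Rightarrow> 'n \<Rightarrow> nat \<Rightarrow> nat) \<Rightarrow> real) \<Rightarrow> real" where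
  "Exp m t X = measure_pmf.expectation (pmf_of_set (perm_space m t)) X"

definition xbar_star ::
  "('n::finite \<Rightarrow> nat \<Rightarrow> 'a::real_vector \<Rightarrow> 'a) \<Rightarrow> 'a \<Rightarrow> real \<Rightarrow> ('n \<Rightarrow> nat \<Rightarrow> nat) \<Rightarrow> nat \<Rightarrow> 'a" where
  "xbar_star g xs \<alpha> P r =
     xs - \<alpha> *\<^sub>R (\<Sum>k<r. (1 / real CARD('n)) *\<^sub>R (\<Sum>i\<in>UNIV. g i (P i k) xs))"

definition shuffle_breg ::
  "('n::finite \<Rightarrow> nat \<Rightarrow> 'a::real_inner \<Rightarrow> real) \<Rightarrow> ('n \<Rightarrow> nat \<Rightarrow> 'a \<Rightarrow> 'a) \<Rightarrow> 'a \<Rightarrow> real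
     \<Rightarrow> ('n \<Rightarrow> nat \<Rightarrow> nat) \<Rightarrow> nat \<Rightarrow> real" where
  "shuffle_breg f g xs \<alpha> P r =
     (let sbar = (\<lambda>x. (1 / real CARD('n)) * (\<Sum>i\<in>UNIV. f i (P i r) x));
          gbar = (1 / real CARD('n)) *\<^sub>R (\<Sum>i\<in>UNIV. g i (P i r) xs);
          y = xbar_star g xs \<alpha> P r
      in sbar y - sbar xs - inner gbar (y - xs))"

definition sigma_shuffle_sq ::
  "('n::finite \<Rightarrow> nat \<Rightarrow> 'a::real_inner \<Rightarrow> real) \<Rightarrow> ('n \<Rightarrow> nat \<Rightarrow> 'a \<Rightarrow> 'a) \<Rightarrow> nat \<Rightarrow> 'a
     \<Rightarrow> (nat \<Rightarrow> real) \<Rightarrow> nat \<Rightarrow> real" where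
  "sigma_shuffle_sq f g m xs \<alpha> t =
     Max ((\<lambda>r. Exp m t (\<lambda>\<omega>. shuffle_breg f g xs (\<alpha> t) (\<omega> t) r)) ` {..<m})"

definition sigma_star_sq ::
  "('n::finite \<Rightarrow> nat \<Rightarrow> 'a \<Rightarrow> 'a::real_normed_vector) \<Rightarrow> nat \<Rightarrow> 'a \<Rightarrow> real" where
  "sigma_star_sq g m xs = (1 / (real m * real CARD('n))) * (\<Sum>i\<in>UNIV. \<Sum>l<m. (norm (g i l xs))\<^sup>2)"

end

theory Submission
  imports Defs
begin

text \<open>One gossip round multiplies the deviation from the average by \<open>W - J\<close>, whose spectral
  norm is \<open>\<rho>\<close>, so the consensus error after the round is at most \<open>\<rho>\<^sup>2\<close> times that of the
  points \<open>x\<^sub>j - \<alpha> \<nabla>f\<^sub>j(x\<^sub>j)\<close>. Young's inequality separates the old consensus error from the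
  gradients, and each gradient is split along the path from \<open>x\<^sub>j\<close> through the average iterate
  and the shuffled reference point \<open>xbar_star\<close> to \<open>x\<^sup>*\<close>: Lipschitz continuity bounds the first
  two legs, co-coercivity bounds the third by a Bregman divergence, and what remains is
  \<open>\<nabla>f\<^sub>j(x\<^sup>*)\<close>. The stepsize bound lets the resulting \<open>\<alpha>\<^sup>2 L\<^sup>2\<close> multiple of the consensus
  error be absorbed into the contraction factor \<open>(1 + \<rho>\<^sup>2) / 2\<close>. In expectation each index
  \<open>\<pi>\<^sup>j\<^sub>\<ell>\<close> is uniform on \<open>[m]\<close>, which turns the squared gradients at \<open>x\<^sup>*\<close> into \<open>n \<sigma>\<^sub>*\<^sup>2\<close>,
  while the expected Bregman term is at most the shuffling variance.\<close>

lemma strongly_convex_on_imp_convex_on: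
  assumes "strongly_convex_on \<mu> f" "0 \<le> \<mu>"
  shows "convex_on UNIV f"
  unfolding convex_on_def
proof (intro conjI ballI allI impI)
  fix x y :: 'a and u v :: real
  assume uv: "0 \<le> u" "0 \<le> v" "u + v = 1"
  then have v: "v = 1 - u" by simp
  have "f (u *\<^sub>R x + (1 - u) *\<^sub>R y) \<le> u * f x + (1 - u) * f y - \<mu> / 2 * u * (1 - u) * (norm (x - y))\<^sup>2"
    using assms(1) uv unfolding strongly_convex_on_def by auto
  moreover have "0 \<le> \<mu> / 2 * u * (1 - u) * (norm (x - y))\<^sup>2"
    using assms(2) uv by (simp add: v)
  ultimately show "f (u *\<^sub>R x + v *\<^sub>R y) \<le> u * f x + v * f y"
    unfolding v by linarith
qed simp

lemma has_real_derivative_along_line: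
  fixes h :: "'a::real_inner \<Rightarrow> real"
  assumes "\<And>x. (h has_derivative (\<lambda>v. inner (G x) v)) (at x)"
  shows "((\<lambda>s. h (y + s *\<^sub>R d)) has_real_derivative inner (G (y + s *\<^sub>R d)) d) (at s)"
proof -
  have "((\<lambda>s. y + s *\<^sub>R d) has_derivative (\<lambda>s. s *\<^sub>R d)) (at s)"
    by (auto intro!: derivative_eq_intros)
  from has_derivative_compose[OF this assms]
  have "((\<lambda>s. h (y + s *\<^sub>R d)) has_derivative (\<lambda>u. inner (G (y + s *\<^sub>R d)) (u *\<^sub>R d))) (at s)"
    by simp
  moreover have "(\<lambda>u. inner (G (y + s *\<^sub>R d)) (u *\<^sub>R d)) = (*) (inner (G (y + s *\<^sub>R d)) d)"
    by (auto simp: fun_eq_iff)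
  ultimately show ?thesis
    by (simp add: has_field_derivative_def)
qed

lemma convex_on_gradient_inequality:
  fixes f :: "'a::real_inner \<Rightarrow> real"
  assumes der: "\<And>x. (f has_derivative (\<lambda>v. inner (G x) v)) (at x)"
    and cvx: "convex_on UNIV f"
  shows "f x + inner (G x) (y - x) \<le> f y"
proof -
  define \<phi> where "\<phi> s = f (x + s *\<^sub>R (y - x))" for s :: real
  have "convex_on UNIV \<phi>"
    unfolding convex_on_def \<phi>_def
  proof (intro conjI ballI allI impI)
    fix a b u v :: real
    assume uv: "0 \<le> u" "0 \<le> v" "u + v = 1"
    then have "x + (u * a + v * b) *\<^sub>R (y - x) = u *\<^sub>R (x + a *\<^sub>R (y - x)) + v *\<^sub>R (x + b *\<^sub>R (y - x))"
      by (simp add: algebra_simps scaleR_add_left[symmetric] del: scaleR_add_left)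
    then show "f (x + (u *\<^sub>R a + v *\<^sub>R b) *\<^sub>R (y - x))
        \<le> u * f (x + a *\<^sub>R (y - x)) + v * f (x + b *\<^sub>R (y - x))"
      using cvx uv unfolding convex_on_def by auto
  qed simp
  moreover have "(\<phi> has_field_derivative inner (G x) (y - x)) (at 0 within UNIV)"
    using has_real_derivative_along_line[OF der, of x "y - x" 0] unfolding \<phi>_def by simp
  ultimately have "\<phi> 1 - \<phi> 0 \<ge> inner (G x) (y - x) * (1 - 0)"
    by (intro convex_on_imp_above_tangent) auto
  then show ?thesis
    unfolding \<phi>_def by simp
qed

lemma lipschitz_gradient_descent_inequality:
  fixes h :: "'a::real_inner \<Rightarrow> real"
  assumes der: "\<And>x. (h has_derivative (\<lambda>v. inner (G x) v)) (at x)"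
    and lip: "L-lipschitz_on UNIV G"
  shows "h (y + d) \<le> h y + inner (G y) d + L / 2 * (norm d)\<^sup>2"
proof -
  define \<psi> where "\<psi> s = h (y + s *\<^sub>R d) - h y - s * inner (G y) d - L / 2 * s\<^sup>2 * (norm d)\<^sup>2" for s
  have "\<psi> 1 \<le> \<psi> 0"
  proof (rule DERIV_nonpos_imp_nonincreasing[of 0 1])
    fix s :: real
    assume s: "0 \<le> s" "s \<le> 1"
    have D: "(\<psi> has_real_derivative
        (inner (G (y + s *\<^sub>R d)) d - inner (G y) d - L * s * (norm d)\<^sup>2)) (at s)"
      unfolding \<psi>_def
      by (rule derivative_eq_intros has_real_derivative_along_line[OF der] refl | simp)+
    have "inner (G (y + s *\<^sub>R d)) d - inner (G y) d = inner (G (y + s *\<^sub>R d) - G y) d"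
      by (simp add: inner_diff_left)
    also have "\<dots> \<le> norm (G (y + s *\<^sub>R d) - G y) * norm d"
      by (rule norm_cauchy_schwarz)
    also have "\<dots> \<le> L * norm (s *\<^sub>R d) * norm d"
      using lipschitz_onD[OF lip, of "y + s *\<^sub>R d" y] by (simp add: dist_norm mult_right_mono)
    also have "\<dots> = L * s * (norm d)\<^sup>2"
      using s by (simp add: power2_eq_square)
    finally show "\<exists>y. (\<psi> has_real_derivative y) (at s) \<and> y \<le> 0"
      using D by auto
  qed simp
  then show ?thesis
    unfolding \<psi>_def by simp
qed

text \<open>Co-coercivity: apply the descent inequality to the nonnegative Bregman divergence
  \<open>z \<mapsto> f z - f x - \<langle>G x, z - x\<rangle>\<close> at the point \<open>y - (G y - G x) / L\<close>.\<close>
lemma convex_lipschitz_gradient_cocoercive: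
  fixes f :: "'a::real_inner \<Rightarrow> real"
  assumes der: "\<And>x. (f has_derivative (\<lambda>v. inner (G x) v)) (at x)"
    and cvx: "convex_on UNIV f" and lip: "L-lipschitz_on UNIV G" and L: "0 < L"
  shows "(norm (G y - G x))\<^sup>2 \<le> 2 * L * (f y - f x - inner (G x) (y - x))"
proof -
  define h where "h z = f z - f x - inner (G x) (z - x)" for z
  define H where "H = G y - G x"
  have h_der: "(h has_derivative (\<lambda>v. inner (G z - G x) v)) (at z)" for z
    unfolding h_def by (rule derivative_eq_intros der refl | simp add: inner_diff_left)+
  have h_lip: "L-lipschitz_on UNIV (\<lambda>z. G z - G x)"
    using lip by (simp add: lipschitz_on_def dist_norm)
  have h_nonneg: "0 \<le> h z" for z
    using convex_on_gradient_inequality[OF der cvx, of x z] by (simp add: h_def)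
  have "h (y + (- (1 / L)) *\<^sub>R H)
      \<le> h y + inner H ((- (1 / L)) *\<^sub>R H) + L / 2 * (norm ((- (1 / L)) *\<^sub>R H))\<^sup>2"
    using lipschitz_gradient_descent_inequality[OF h_der h_lip, of y "(- (1 / L)) *\<^sub>R H"]
    by (simp add: H_def)
  also have "\<dots> = h y - (norm H)\<^sup>2 / (2 * L)"
    using L by (simp add: power2_eq_square power_mult_distrib field_simps)
      (simp add: power2_norm_eq_inner[symmetric] power2_eq_square)
  finally have "(norm H)\<^sup>2 / (2 * L) \<le> h y"
    using h_nonneg[of "y + (- (1 / L)) *\<^sub>R H"] by linarith
  then show ?thesis
    using L by (simp add: H_def h_def field_simps)
qed

lemma lipschitz_on_norm_diff_sq:
  assumes "L-lipschitz_on UNIV G" "0 \<le> L"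
  shows "(norm (G x - G y))\<^sup>2 \<le> L\<^sup>2 * (norm (x - y))\<^sup>2"
proof -
  have "norm (G x - G y) \<le> L * norm (x - y)"
    using lipschitz_onD[OF assms(1), of x y] by (simp add: dist_norm)
  then show ?thesis
    by (metis norm_ge_zero power_mono power_mult_distrib)
qed

lemma norm_diff_sq_le_Young:
  fixes u v :: "'a::real_inner"
  assumes "0 < e"
  shows "(norm (u - v))\<^sup>2 \<le> (1 + e) * (norm u)\<^sup>2 + (1 + 1 / e) * (norm v)\<^sup>2"
proof -
  have "0 \<le> (norm (e *\<^sub>R u + v))\<^sup>2"
    by simp
  also have "\<dots> = e\<^sup>2 * (norm u)\<^sup>2 + 2 * e * inner u v + (norm v)\<^sup>2"
    unfolding power2_norm_eq_inner
    by (simp add: inner_add_left inner_add_right inner_commute power2_eq_square algebra_simps)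
  finally have "- 2 * inner u v \<le> e * (norm u)\<^sup>2 + (norm v)\<^sup>2 / e"
    using assms by (simp add: field_simps power2_eq_square)
  moreover have "(norm (u - v))\<^sup>2 = (norm u)\<^sup>2 - 2 * inner u v + (norm v)\<^sup>2"
    unfolding power2_norm_eq_inner by (simp add: inner_diff_left inner_diff_right inner_commute)
  ultimately show ?thesis
    by (simp add: algebra_simps)
qed

text \<open>The reciprocals of the weights sum to one: \<open>1/3 + 2/15 + 4/15 + 4/15 = 1\<close>.\<close>
lemma norm_add4_sq_le:
  fixes A B C D :: "'a::real_normed_vector"
  shows "(norm (A + B + C + D))\<^sup>2
    \<le> 3 * (norm A)\<^sup>2 + 15/2 * (norm B)\<^sup>2 + 15/4 * (norm C)\<^sup>2 + 15/4 * (norm D)\<^sup>2"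
proof -
  have real_case: "(p + q + z + w)\<^sup>2 \<le> 3 * p\<^sup>2 + 15/2 * q\<^sup>2 + 15/4 * z\<^sup>2 + 15/4 * w\<^sup>2"
    for p q z w :: real
  proof -
    have "1280 * (3 * p\<^sup>2 + 15/2 * q\<^sup>2 + 15/4 * z\<^sup>2 + 15/4 * w\<^sup>2) - 1280 * (p + q + z + w)\<^sup>2
       = 8 * (8*p - 20*q)\<^sup>2 + 4 * (16*p - 20*z)\<^sup>2 + 4 * (16*p - 20*w)\<^sup>2
         + 10 * (16*q - 8*z)\<^sup>2 + 10 * (16*q - 8*w)\<^sup>2 + 5 * (16*z - 16*w)\<^sup>2"
      by algebra
    moreover have "0 \<le> 8 * (8*p - 20*q)\<^sup>2 + 4 * (16*p - 20*z)\<^sup>2 + 4 * (16*p - 20*w)\<^sup>2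
         + 10 * (16*q - 8*z)\<^sup>2 + 10 * (16*q - 8*w)\<^sup>2 + 5 * (16*z - 16*w)\<^sup>2"
      by simp
    ultimately show ?thesis
      by (smt (verit))
  qed
  have "norm (A + B + C + D) \<le> norm A + norm B + norm C + norm D"
    by (meson add_mono norm_triangle_le order_refl)
  then have "(norm (A + B + C + D))\<^sup>2 \<le> (norm A + norm B + norm C + norm D)\<^sup>2"
    by (simp add: power_mono)
  also have "\<dots> \<le> 3 * (norm A)\<^sup>2 + 15/2 * (norm B)\<^sup>2 + 15/4 * (norm C)\<^sup>2 + 15/4 * (norm D)\<^sup>2"
    by (rule real_case)
  finally show ?thesis .
qed

lemma weighted_mean_sq_le:
  fixes w u :: "'b \<Rightarrow> real"
  assumes "finite A" "\<And>j. j \<in> A \<Longrightarrow> 0 \<le> w j" "(\<Sum>j\<in>A. w j) = 1"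
  shows "(\<Sum>j\<in>A. w j * u j)\<^sup>2 \<le> (\<Sum>j\<in>A. w j * (u j)\<^sup>2)"
proof -
  define c where "c = (\<Sum>j\<in>A. w j * u j)"
  have "0 \<le> (\<Sum>j\<in>A. w j * (u j - c)\<^sup>2)"
    using assms by (intro sum_nonneg) auto
  also have "\<dots> = (\<Sum>j\<in>A. w j * (u j)\<^sup>2) - 2 * c * (\<Sum>j\<in>A. w j * u j) + c\<^sup>2 * (\<Sum>j\<in>A. w j)"
    by (simp add: power2_eq_square algebra_simps sum.distrib sum_subtractf sum_distrib_left)
  finally show ?thesis
    using assms(3) by (simp add: c_def power2_eq_square)
qed

lemma norm_sq_eq_sum_Basis: "(norm (z::'a::euclidean_space))\<^sup>2 = (\<Sum>b\<in>Basis. (z \<bullet> b)\<^sup>2)"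
  by (simp only: power2_norm_eq_inner euclidean_inner[of z z]) (simp add: power2_eq_square)

lemma norm_sq_vec_eq_sum: "(norm (v::real^'n))\<^sup>2 = (\<Sum>i\<in>UNIV. (v $ i)\<^sup>2)"
  by (simp only: power2_norm_eq_inner inner_vec_def) (simp add: power2_eq_square)

text \<open>Apply the spectral-norm bound to every coordinate column \<open>j \<mapsto> Z j \<bullet> b\<close>.\<close>
lemma sum_norm_sq_matrix_rows_le:
  fixes M :: "real^'n^'n" and Z :: "'n \<Rightarrow> 'a::euclidean_space"
  shows "(\<Sum>i\<in>UNIV. (norm (\<Sum>j\<in>UNIV. M$i$j *\<^sub>R Z j))\<^sup>2)
    \<le> (spectral_norm M)\<^sup>2 * (\<Sum>j\<in>UNIV. (norm (Z j))\<^sup>2)"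
proof -
  define V where "V b = (\<chi> j. Z j \<bullet> b)" for b
  have "(\<Sum>i\<in>UNIV. (norm (\<Sum>j\<in>UNIV. M$i$j *\<^sub>R Z j))\<^sup>2)
      = (\<Sum>i\<in>UNIV. \<Sum>b\<in>Basis. ((M *v V b) $ i)\<^sup>2)"
    by (simp add: norm_sq_eq_sum_Basis inner_sum_left V_def matrix_vector_mult_def)
  also have "\<dots> = (\<Sum>b\<in>Basis. (norm (M *v V b))\<^sup>2)"
    by (subst sum.swap) (simp add: norm_sq_vec_eq_sum)
  also have "\<dots> \<le> (\<Sum>b\<in>Basis. (spectral_norm M)\<^sup>2 * (norm (V b))\<^sup>2)"
  proof (rule sum_mono)
    fix b :: 'a
    have "norm (M *v V b) \<le> spectral_norm M * norm (V b)"
      unfolding spectral_norm_def by (rule onorm) simp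
    then show "(norm (M *v V b))\<^sup>2 \<le> (spectral_norm M)\<^sup>2 * (norm (V b))\<^sup>2"
      by (metis norm_ge_zero power_mono power_mult_distrib)
  qed
  also have "\<dots> = (spectral_norm M)\<^sup>2 * (\<Sum>j\<in>UNIV. (norm (Z j))\<^sup>2)"
    using sum.swap[of "\<lambda>b j. (Z j \<bullet> b)\<^sup>2" UNIV Basis]
    by (simp add: sum_distrib_left[symmetric] norm_sq_vec_eq_sum V_def norm_sq_eq_sum_Basis[of "Z _"])
  finally show ?thesis .
qed

lemma mixing_matrix_nonneg: "mixing_matrix W \<Longrightarrow> 0 \<le> W$i$j"
  by (simp add: mixing_matrix_def)

lemma mixing_matrix_symmetric: "mixing_matrix W \<Longrightarrow> W$i$j = W$j$i"
proof -
  assume "mixing_matrix W"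
  then have "transpose W $ i $ j = W $ i $ j"
    by (simp add: mixing_matrix_def)
  then show ?thesis
    by (simp add: transpose_def)
qed

lemma mixing_matrix_row_sum: "mixing_matrix W \<Longrightarrow> (\<Sum>j\<in>UNIV. W$i$j) = 1"
proof -
  assume "mixing_matrix W"
  then have "(W *v vec 1) $ i = vec 1 $ i"
    by (simp add: mixing_matrix_def)
  then show ?thesis
    by (simp add: matrix_vector_mult_def)
qed

lemma mixing_matrix_column_sum: "mixing_matrix W \<Longrightarrow> (\<Sum>i\<in>UNIV. W$i$j) = 1"
  by (metis (no_types, lifting) mixing_matrix_row_sum mixing_matrix_symmetric sum.cong)

lemma rho_w_nonneg: "0 \<le> rho_w W"
  unfolding rho_w_def spectral_norm_def by (rule onorm_pos_le) simp

text \<open>Row sums one make \<open>(W - J) v = W u\<close> with \<open>u = v - mean v\<close>; then Jensen in every row and column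
  sums one give \<open>\<parallel>(W - J) v\<parallel>\<^sup>2 \<le> \<parallel>u\<parallel>\<^sup>2 \<le> \<parallel>v\<parallel>\<^sup>2\<close>.\<close>
lemma rho_w_le_1:
  fixes W :: "real^'n::finite^'n"
  assumes W: "mixing_matrix W"
  shows "rho_w W \<le> 1"
  unfolding rho_w_def spectral_norm_def
proof (rule onorm_le)
  fix v :: "real^'n"
  define c where "c = (\<Sum>j\<in>UNIV. v$j) / real CARD('n)"
  define u where "u j = v$j - c" for j
  have component: "((W - (\<chi> i j. 1 / real CARD('n))) *v v) $ i = (\<Sum>j\<in>UNIV. W$i$j * u j)" for i
  proof -
    have "(\<Sum>j\<in>UNIV. W$i$j * u j) = (\<Sum>j\<in>UNIV. W$i$j * v$j) - c * (\<Sum>j\<in>UNIV. W$i$j)"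
      by (simp add: u_def algebra_simps sum_subtractf sum_distrib_left)
    then show ?thesis
      using mixing_matrix_row_sum[OF W]
      by (simp add: matrix_vector_mult_def c_def algebra_simps sum_subtractf sum_divide_distrib)
  qed
  have "(norm ((W - (\<chi> i j. 1 / real CARD('n))) *v v))\<^sup>2 = (\<Sum>i\<in>UNIV. (\<Sum>j\<in>UNIV. W$i$j * u j)\<^sup>2)"
    by (simp add: norm_sq_vec_eq_sum component)
  also have "\<dots> \<le> (\<Sum>i\<in>UNIV. \<Sum>j\<in>UNIV. W$i$j * (u j)\<^sup>2)"
    by (intro sum_mono weighted_mean_sq_le)
      (auto simp: mixing_matrix_nonneg[OF W] mixing_matrix_row_sum[OF W])
  also have "\<dots> = (\<Sum>j\<in>UNIV. (u j)\<^sup>2)"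
    by (subst sum.swap) (simp add: sum_distrib_right[symmetric] mixing_matrix_column_sum[OF W])
  also have "\<dots> = (\<Sum>j\<in>UNIV. (v$j)\<^sup>2) - 2 * c * (\<Sum>j\<in>UNIV. v$j) + real CARD('n) * c\<^sup>2"
    by (simp add: u_def power2_eq_square algebra_simps sum.distrib sum_subtractf sum_distrib_left)
  also have "(\<Sum>j\<in>UNIV. v$j) = real CARD('n) * c"
    by (simp add: c_def)
  also have "(\<Sum>j\<in>UNIV. (v$j)\<^sup>2) - 2 * c * (real CARD('n) * c) + real CARD('n) * c\<^sup>2
      = (\<Sum>j\<in>UNIV. (v$j)\<^sup>2) - real CARD('n) * c\<^sup>2"
    by (simp add: power2_eq_square)
  also have "\<dots> \<le> (norm v)\<^sup>2"
    by (simp add: norm_sq_vec_eq_sum)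
  finally have "(norm ((W - (\<chi> i j. 1 / real CARD('n))) *v v))\<^sup>2 \<le> (norm v)\<^sup>2" .
  then show "norm ((W - (\<chi> i j. 1 / real CARD('n))) *v v) \<le> 1 * norm v"
    using power2_le_imp_le by fastforce
qed

lemma consensus_err_drr_step_le:
  fixes W :: "real^'n::finite^'n" and X :: "'n \<Rightarrow> 'a::euclidean_space"
  assumes W: "mixing_matrix W"
  shows "consensus_err (drr_step W g a P r X)
    \<le> (rho_w W)\<^sup>2 * (\<Sum>j\<in>UNIV. (norm (X j - a *\<^sub>R g j (P j r) (X j) - agent_avg X))\<^sup>2)"
proof -
  define n where "n = real CARD('n)"
  define Y where "Y j = X j - a *\<^sub>R g j (P j r) (X j)" for j
  define M :: "real^'n^'n" where "M = W - (\<chi> i j. 1 / real CARD('n))"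
  have step: "drr_step W g a P r X = (\<lambda>i. \<Sum>j\<in>UNIV. W$i$j *\<^sub>R Y j)"
    unfolding drr_step_def Y_def by simp
  have "(\<Sum>i\<in>UNIV. \<Sum>j\<in>UNIV. W$i$j *\<^sub>R Y j) = (\<Sum>j\<in>UNIV. (\<Sum>i\<in>UNIV. W$i$j) *\<^sub>R Y j)"
    by (subst sum.swap) (simp add: scaleR_sum_left)
  then have avg: "agent_avg (\<lambda>i. \<Sum>j\<in>UNIV. W$i$j *\<^sub>R Y j) = (1 / n) *\<^sub>R (\<Sum>j\<in>UNIV. Y j)"
    unfolding agent_avg_def n_def by (simp add: mixing_matrix_column_sum[OF W])
  have const: "(\<Sum>j::'n\<in>UNIV. (1 / n) *\<^sub>R agent_avg X) = agent_avg X"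
    by (simp add: n_def sum_constant_scaleR)
  have deviation: "(\<Sum>j\<in>UNIV. W$i$j *\<^sub>R Y j) - (1 / n) *\<^sub>R (\<Sum>j\<in>UNIV. Y j)
      = (\<Sum>j\<in>UNIV. M$i$j *\<^sub>R (Y j - agent_avg X))" for i
  proof -
    have "(\<Sum>j\<in>UNIV. M$i$j *\<^sub>R (Y j - agent_avg X))
       = (\<Sum>j\<in>UNIV. W$i$j *\<^sub>R Y j) - (\<Sum>j\<in>UNIV. W$i$j) *\<^sub>R agent_avg X
         - (1 / n) *\<^sub>R (\<Sum>j\<in>UNIV. Y j) + agent_avg X"
      using const by (simp add: M_def n_def algebra_simps sum_subtractf sum.distrib
          scaleR_sum_left scaleR_sum_right)
    then show ?thesis
      by (simp add: mixing_matrix_row_sum[OF W])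
  qed
  have "consensus_err (drr_step W g a P r X)
      = (\<Sum>i\<in>UNIV. (norm (\<Sum>j\<in>UNIV. M$i$j *\<^sub>R (Y j - agent_avg X)))\<^sup>2)"
    unfolding consensus_err_def step avg deviation ..
  also have "\<dots> \<le> (spectral_norm M)\<^sup>2 * (\<Sum>j\<in>UNIV. (norm (Y j - agent_avg X))\<^sup>2)"
    by (rule sum_norm_sq_matrix_rows_le)
  finally show ?thesis
    unfolding Y_def M_def rho_w_def .
qed

text \<open>Young's inequality with \<open>\<epsilon> = (1 - \<rho>\<^sup>2) / (4 \<rho>\<^sup>2)\<close>, chosen so that \<open>\<rho>\<^sup>2 (1 + \<epsilon>)\<close>
  stays halfway between \<open>\<rho>\<^sup>2\<close> and the target contraction factor \<open>(1 + \<rho>\<^sup>2) / 2\<close>.\<close>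
lemma consensus_err_drr_step_le_Young:
  fixes W :: "real^'n::finite^'n" and X :: "'n \<Rightarrow> 'a::euclidean_space"
  assumes W: "mixing_matrix W" and rho: "rho_w W < 1"
  shows "consensus_err (drr_step W g a P r X)
    \<le> (1 + 3 * (rho_w W)\<^sup>2) / 4 * consensus_err X
      + (rho_w W)\<^sup>2 * (1 + 3 * (rho_w W)\<^sup>2) / (1 - (rho_w W)\<^sup>2) * a\<^sup>2
        * (\<Sum>j\<in>UNIV. (norm (g j (P j r) (X j)))\<^sup>2)"
    (is "_ \<le> ?rhs")
proof -
  define s where "s = (rho_w W)\<^sup>2"
  define G where "G j = g j (P j r) (X j)" for j
  have s0: "0 \<le> s" and s1: "s < 1"
    using rho rho_w_nonneg[of W] by (auto simp: s_def power_less_one_iff)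
  have rhs_nonneg: "0 \<le> ?rhs"
    using s0 s1 by (simp add: s_def[symmetric] consensus_err_def sum_nonneg)
  show ?thesis
  proof (cases "s = 0")
    case True
    then show ?thesis
      using consensus_err_drr_step_le[OF W, of g a P r X] rhs_nonneg by (simp add: s_def)
  next
    case False
    define e where "e = (1 - s) / (4 * s)"
    have e0: "0 < e"
      using False s0 s1 by (simp add: e_def)
    have "consensus_err (drr_step W g a P r X)
        \<le> s * (\<Sum>j\<in>UNIV. (norm ((X j - agent_avg X) - a *\<^sub>R G j))\<^sup>2)"
      using consensus_err_drr_step_le[OF W, of g a P r X] by (simp add: s_def G_def algebra_simps)
    also have "\<dots> \<le> s * (\<Sum>j\<in>UNIV. (1 + e) * (norm (X j - agent_avg X))\<^sup>2
        + (1 + 1 / e) * (a\<^sup>2 * (norm (G j))\<^sup>2))"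
    proof (intro mult_left_mono sum_mono)
      fix j
      have "(norm (a *\<^sub>R G j))\<^sup>2 = a\<^sup>2 * (norm (G j))\<^sup>2"
        by (simp add: power_mult_distrib)
      then show "(norm ((X j - agent_avg X) - a *\<^sub>R G j))\<^sup>2
          \<le> (1 + e) * (norm (X j - agent_avg X))\<^sup>2 + (1 + 1 / e) * (a\<^sup>2 * (norm (G j))\<^sup>2)"
        using norm_diff_sq_le_Young[OF e0, of "X j - agent_avg X" "a *\<^sub>R G j"] by simp
    qed (use s0 in simp)
    also have "\<dots> = s * (1 + e) * consensus_err X
        + s * (1 + 1 / e) * a\<^sup>2 * (\<Sum>j\<in>UNIV. (norm (G j))\<^sup>2)"
      by (simp add: consensus_err_def sum.distrib sum_distrib_left algebra_simps)
    also have "s * (1 + e) = (1 + 3 * s) / 4"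
      using False by (simp add: e_def field_simps)
    also have "s * (1 + 1 / e) = s * (1 + 3 * s) / (1 - s)"
      using False s1 by (simp add: e_def field_simps)
    finally show ?thesis
      by (simp add: s_def G_def)
  qed
qed

lemma sum_norm_sq_gradients_le:
  fixes F :: "'n::finite \<Rightarrow> 'a::real_inner \<Rightarrow> real" and G :: "'n \<Rightarrow> 'a \<Rightarrow> 'a"
  assumes der: "\<And>j x. (F j has_derivative (\<lambda>h. inner (G j x) h)) (at x)"
    and cvx: "\<And>j. convex_on UNIV (F j)"
    and lip: "\<And>j. L-lipschitz_on UNIV (G j)" and L: "0 < L"
  shows "(\<Sum>j\<in>UNIV. (norm (G j (x j)))\<^sup>2)
    \<le> 3 * L\<^sup>2 * (\<Sum>j\<in>UNIV. (norm (x j - u))\<^sup>2) + 15/2 * real CARD('n) * L\<^sup>2 * (norm (u - y))\<^sup>2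
      + 15/2 * L * (\<Sum>j\<in>UNIV. F j y - F j z - inner (G j z) (y - z))
      + 15/4 * (\<Sum>j\<in>UNIV. (norm (G j z))\<^sup>2)"
proof -
  define B where "B j = F j y - F j z - inner (G j z) (y - z)" for j
  have "(norm (G j (x j)))\<^sup>2 \<le> 3 * (L\<^sup>2 * (norm (x j - u))\<^sup>2) + 15/2 * (L\<^sup>2 * (norm (u - y))\<^sup>2)
      + 15/4 * (2 * L * B j) + 15/4 * (norm (G j z))\<^sup>2" for j
  proof -
    have "G j (x j) = (G j (x j) - G j u) + (G j u - G j y) + (G j y - G j z) + G j z"
      by simp
    then have "(norm (G j (x j)))\<^sup>2 \<le> 3 * (norm (G j (x j) - G j u))\<^sup>2
        + 15/2 * (norm (G j u - G j y))\<^sup>2 + 15/4 * (norm (G j y - G j z))\<^sup>2 + 15/4 * (norm (G j z))\<^sup>2"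
      by (metis norm_add4_sq_le)
    moreover have "(norm (G j (x j) - G j u))\<^sup>2 \<le> L\<^sup>2 * (norm (x j - u))\<^sup>2"
      and "(norm (G j u - G j y))\<^sup>2 \<le> L\<^sup>2 * (norm (u - y))\<^sup>2"
      using lipschitz_on_norm_diff_sq[OF lip] L by auto
    moreover have "(norm (G j y - G j z))\<^sup>2 \<le> 2 * L * B j"
      unfolding B_def by (rule convex_lipschitz_gradient_cocoercive[OF der cvx lip L])
    ultimately show ?thesis
      by linarith
  qed
  then have "(\<Sum>j\<in>UNIV. (norm (G j (x j)))\<^sup>2) \<le> (\<Sum>j\<in>UNIV. 3 * (L\<^sup>2 * (norm (x j - u))\<^sup>2)
      + 15/2 * (L\<^sup>2 * (norm (u - y))\<^sup>2) + 15/4 * (2 * L * B j) + 15/4 * (norm (G j z))\<^sup>2)"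
    by (rule sum_mono)
  also have "\<dots> = 3 * L\<^sup>2 * (\<Sum>j\<in>UNIV. (norm (x j - u))\<^sup>2) + 15/2 * real CARD('n) * L\<^sup>2 * (norm (u - y))\<^sup>2
      + 15/2 * L * (\<Sum>j\<in>UNIV. B j) + 15/4 * (\<Sum>j\<in>UNIV. (norm (G j z))\<^sup>2)"
    by (simp add: sum.distrib sum_distrib_left mult.assoc)
  finally show ?thesis
    unfolding B_def .
qed

lemma card_mult_shuffle_breg:
  fixes f :: "'n::finite \<Rightarrow> nat \<Rightarrow> 'a::real_inner \<Rightarrow> real"
  shows "real CARD('n) * shuffle_breg f g xs a P r
    = (\<Sum>j\<in>UNIV. f j (P j r) (xbar_star g xs a P r) - f j (P j r) xs
        - inner (g j (P j r) xs) (xbar_star g xs a P r - xs))"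
  by (simp add: shuffle_breg_def Let_def inner_sum_left sum_subtractf right_diff_distrib
      sum_distrib_left)

lemma shuffle_breg_nonneg:
  fixes f :: "'n::finite \<Rightarrow> nat \<Rightarrow> 'a::real_inner \<Rightarrow> real"
  assumes der: "\<And>j x. (f j (P j r) has_derivative (\<lambda>h. inner (g j (P j r) x) h)) (at x)"
    and cvx: "\<And>j. convex_on UNIV (f j (P j r))"
  shows "0 \<le> shuffle_breg f g xs a P r"
proof -
  have "f j (P j r) xs + inner (g j (P j r) xs) (xbar_star g xs a P r - xs)
      \<le> f j (P j r) (xbar_star g xs a P r)" for j
    by (rule convex_on_gradient_inequality[OF der cvx])
  then have "0 \<le> real CARD('n) * shuffle_breg f g xs a P r"
    unfolding card_mult_shuffle_breg by (intro sum_nonneg) (simp add: algebra_simps)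
  then show ?thesis
    by (simp add: zero_le_mult_iff)
qed

lemma drr_coefficients_absorb:
  fixes s a L n C D B Q :: real
  assumes s: "0 \<le> s" "s < 1" and n: "0 \<le> n" and L: "0 < L"
    and nonneg: "0 \<le> C" "0 \<le> D" "0 \<le> B" "0 \<le> Q"
    and cond: "3 * s * (1 + 3 * s) * a\<^sup>2 * L\<^sup>2 \<le> (1 - s)\<^sup>2 / 4"
  shows "(1 + 3 * s) / 4 * C
      + s * (1 + 3 * s) / (1 - s) * a\<^sup>2 * (3 * L\<^sup>2 * C + 15/2 * n * L\<^sup>2 * D + 15/2 * L * B + 15/4 * Q)
    \<le> (1 + s) / 2 * C + 30 * a\<^sup>2 * n * L\<^sup>2 / (1 - s) * D + 15 * s * a\<^sup>2 / (1 - s) * (Q + 2 * L * B)"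
proof -
  define d where "d = 1 - s"
  define K where "K = s * (1 + 3 * s) / d"
  have d: "0 < d"
    using s by (simp add: d_def)
  have small: "1 + 3 * s \<le> 4" "s * (1 + 3 * s) \<le> 4"
    using s by (auto intro: order.trans[OF mult_right_mono[of s 1]])
  have cC: "(1 + 3 * s) / 4 + K * a\<^sup>2 * (3 * L\<^sup>2) \<le> (1 + s) / 2"
  proof -
    have "K * a\<^sup>2 * (3 * L\<^sup>2) = 3 * s * (1 + 3 * s) * a\<^sup>2 * L\<^sup>2 / d"
      by (simp add: K_def)
    also have "\<dots> \<le> d / 4"
      using cond d by (simp add: d_def divide_le_eq power2_eq_square)
    finally show ?thesis
      by (simp add: d_def field_simps)
  qed
  have cD: "K * a\<^sup>2 * (15/2 * n * L\<^sup>2) \<le> 30 * a\<^sup>2 * n * L\<^sup>2 / d"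
  proof -
    have "K * a\<^sup>2 * (15/2 * n * L\<^sup>2) = (s * (1 + 3 * s)) * (15/2 * a\<^sup>2 * n * L\<^sup>2 / d)"
      by (simp add: K_def)
    also have "\<dots> \<le> 4 * (15/2 * a\<^sup>2 * n * L\<^sup>2 / d)"
      using small d n by (intro mult_right_mono) auto
    finally show ?thesis
      by (simp add: ac_simps)
  qed
  have cB: "K * a\<^sup>2 * (15/2 * L) \<le> 15 * s * a\<^sup>2 / d * (2 * L)"
  proof -
    have "K * a\<^sup>2 * (15/2 * L) = (1 + 3 * s) * (15/2 * s * a\<^sup>2 * L / d)"
      by (simp add: K_def ac_simps)
    also have "\<dots> \<le> 4 * (15/2 * s * a\<^sup>2 * L / d)"
      using small d s L by (intro mult_right_mono) auto
    finally show ?thesis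
      by (simp add: ac_simps)
  qed
  have cQ: "K * a\<^sup>2 * (15/4) \<le> 15 * s * a\<^sup>2 / d"
  proof -
    have "K * a\<^sup>2 * (15/4) = (1 + 3 * s) * (15/4 * s * a\<^sup>2 / d)"
      by (simp add: K_def ac_simps)
    also have "\<dots> \<le> 4 * (15/4 * s * a\<^sup>2 / d)"
      using small d s by (intro mult_right_mono) auto
    finally show ?thesis
      by simp
  qed
  have "(1 + 3 * s) / 4 * C + K * a\<^sup>2 * (3 * L\<^sup>2 * C + 15/2 * n * L\<^sup>2 * D + 15/2 * L * B + 15/4 * Q)
      = ((1 + 3 * s) / 4 + K * a\<^sup>2 * (3 * L\<^sup>2)) * C + K * a\<^sup>2 * (15/2 * n * L\<^sup>2) * D
        + K * a\<^sup>2 * (15/2 * L) * B + K * a\<^sup>2 * (15/4) * Q"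
    by (simp add: algebra_simps)
  also have "\<dots> \<le> (1 + s) / 2 * C + 30 * a\<^sup>2 * n * L\<^sup>2 / d * D
      + 15 * s * a\<^sup>2 / d * (2 * L) * B + 15 * s * a\<^sup>2 / d * Q"
    using nonneg by (intro add_mono mult_right_mono cC cD cB cQ)
  also have "\<dots> = (1 + s) / 2 * C + 30 * a\<^sup>2 * n * L\<^sup>2 / d * D + 15 * s * a\<^sup>2 / d * (Q + 2 * L * B)"
    by (simp add: algebra_simps add_divide_distrib)
  finally show ?thesis
    unfolding K_def d_def .
qed

lemma consensus_err_drr_step_bound:
  fixes W :: "real^'n::finite^'n" and f :: "'n \<Rightarrow> nat \<Rightarrow> 'a::euclidean_space \<Rightarrow> real"
  assumes W: "mixing_matrix W"
    and der: "\<And>j x. (f j (P j r) has_derivative (\<lambda>h. inner (g j (P j r) x) h)) (at x)"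
    and cvx: "\<And>j. convex_on UNIV (f j (P j r))"
    and lip: "\<And>j. L-lipschitz_on UNIV (g j (P j r))" and L: "0 < L"
    and rho: "rho_w W < 1"
    and cond: "3 * (rho_w W)\<^sup>2 * (1 + 3 * (rho_w W)\<^sup>2) * a\<^sup>2 * L\<^sup>2 \<le> (1 - (rho_w W)\<^sup>2)\<^sup>2 / 4"
  shows "consensus_err (drr_step W g a P r X)
    \<le> (1 + (rho_w W)\<^sup>2) / 2 * consensus_err X
      + 30 * a\<^sup>2 * real CARD('n) * L\<^sup>2 / (1 - (rho_w W)\<^sup>2) * (norm (agent_avg X - xbar_star g xs a P r))\<^sup>2
      + 15 * real CARD('n) * (rho_w W)\<^sup>2 * a\<^sup>2 / (1 - (rho_w W)\<^sup>2)
        * ((\<Sum>i\<in>UNIV. (norm (g i (P i r) xs))\<^sup>2) / real CARD('n) + 2 * L * shuffle_breg f g xs a P r)"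
proof -
  define s where "s = (rho_w W)\<^sup>2"
  define n where "n = real CARD('n)"
  define C where "C = consensus_err X"
  define D where "D = (norm (agent_avg X - xbar_star g xs a P r))\<^sup>2"
  define B where "B = n * shuffle_breg f g xs a P r"
  define Q where "Q = (\<Sum>i\<in>UNIV. (norm (g i (P i r) xs))\<^sup>2)"
  have s: "0 \<le> s" "s < 1"
    using rho rho_w_nonneg[of W] by (auto simp: s_def power_less_one_iff)
  have n: "0 < n"
    by (simp add: n_def)
  have nonneg: "0 \<le> C" "0 \<le> D" "0 \<le> B" "0 \<le> Q"
    using shuffle_breg_nonneg[where f = f and g = g and P = P and r = r, OF der cvx] n
    by (simp_all add: C_def D_def B_def Q_def consensus_err_def sum_nonneg)
  have grads: "(\<Sum>j\<in>UNIV. (norm (g j (P j r) (X j)))\<^sup>2)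
      \<le> 3 * L\<^sup>2 * C + 15/2 * n * L\<^sup>2 * D + 15/2 * L * B + 15/4 * Q"
    using sum_norm_sq_gradients_le[OF der cvx lip L, where x = X and u = "agent_avg X"
        and y = "xbar_star g xs a P r" and z = xs]
    unfolding C_def D_def B_def Q_def n_def card_mult_shuffle_breg consensus_err_def .
  have "consensus_err (drr_step W g a P r X)
      \<le> (1 + 3 * s) / 4 * C + s * (1 + 3 * s) / (1 - s) * a\<^sup>2
        * (\<Sum>j\<in>UNIV. (norm (g j (P j r) (X j)))\<^sup>2)"
    using consensus_err_drr_step_le_Young[OF W rho] by (simp add: s_def C_def)
  also have "\<dots> \<le> (1 + 3 * s) / 4 * C + s * (1 + 3 * s) / (1 - s) * a\<^sup>2
        * (3 * L\<^sup>2 * C + 15/2 * n * L\<^sup>2 * D + 15/2 * L * B + 15/4 * Q)"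
    using grads s by (intro add_left_mono mult_left_mono) auto
  also have "\<dots> \<le> (1 + s) / 2 * C + 30 * a\<^sup>2 * n * L\<^sup>2 / (1 - s) * D + 15 * s * a\<^sup>2 / (1 - s) * (Q + 2 * L * B)"
    using cond s n L nonneg by (intro drr_coefficients_absorb) (simp_all add: s_def)
  also have "15 * s * a\<^sup>2 / (1 - s) * (Q + 2 * L * B)
      = 15 * n * s * a\<^sup>2 / (1 - s) * (Q / n + 2 * L * shuffle_breg f g xs a P r)"
    using n s by (simp add: B_def field_simps)
  finally show ?thesis
    by (simp add: s_def n_def C_def D_def Q_def)
qed

text \<open>For \<open>\<rho> = 1\<close> the stepsize bound would force \<open>\<alpha> \<le> 0\<close>; for \<open>0 < \<rho> < 1\<close> it gives
  \<open>\<alpha>\<^sup>2 L\<^sup>2 \<le> q (1 - \<rho>\<^sup>2)\<^sup>2\<close> with \<open>12 \<rho>\<^sup>2 (1 + 3 \<rho>\<^sup>2) q \<le> 1\<close>.\<close>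
lemma drr_stepsize_condition:
  fixes W :: "real^'n::finite^'n"
  assumes W: "mixing_matrix W" and a: "0 < a" and L: "0 < L"
    and a_le: "rho_w W \<noteq> 0 \<Longrightarrow>
      a \<le> sqrt ((2 - (rho_w W)\<^sup>2) / (24 * (rho_w W)\<^sup>2 * (5 - (rho_w W)\<^sup>2))) * (1 - (rho_w W)\<^sup>2) / L"
  shows "rho_w W < 1"
    and "3 * (rho_w W)\<^sup>2 * (1 + 3 * (rho_w W)\<^sup>2) * a\<^sup>2 * L\<^sup>2 \<le> (1 - (rho_w W)\<^sup>2)\<^sup>2 / 4"
proof -
  have rho: "0 \<le> rho_w W" "rho_w W \<le> 1"
    by (rule rho_w_nonneg, rule rho_w_le_1[OF W])
  show rho_lt: "rho_w W < 1"
  proof (rule ccontr)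
    assume "\<not> rho_w W < 1"
    then have "rho_w W = 1"
      using rho by simp
    then show False
      using a_le a by simp
  qed
  show "3 * (rho_w W)\<^sup>2 * (1 + 3 * (rho_w W)\<^sup>2) * a\<^sup>2 * L\<^sup>2 \<le> (1 - (rho_w W)\<^sup>2)\<^sup>2 / 4"
  proof (cases "rho_w W = 0")
    case False
    define s where "s = (rho_w W)\<^sup>2"
    define q where "q = (2 - s) / (24 * s * (5 - s))"
    have s: "0 < s" "s < 1"
      using False rho rho_lt by (auto simp: s_def power_less_one_iff)
    have q: "0 \<le> q"
      using s by (simp add: q_def)
    have "a * L \<le> sqrt q * (1 - s)"
      using a_le False L by (simp add: q_def s_def field_simps)
    then have "(a * L)\<^sup>2 \<le> (sqrt q * (1 - s))\<^sup>2"
      using a L by (intro power_mono) auto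
    then have aL: "a\<^sup>2 * L\<^sup>2 \<le> q * (1 - s)\<^sup>2"
      using q by (simp add: power_mult_distrib)
    have "3 * s * (1 + 3 * s) * q = (1 + 3 * s) * (2 - s) / (8 * (5 - s))"
      using s by (simp add: q_def field_simps)
    also have "\<dots> \<le> 1 / 4"
    proof -
      have "(1 + 3 * s) * (2 - s) = 2 + 5 * s - 3 * s\<^sup>2"
        by (simp add: algebra_simps power2_eq_square)
      also have "\<dots> \<le> 2 * (5 - s)"
        using s by (smt (verit) zero_le_power2)
      finally show ?thesis
        using s by (simp add: field_simps)
    qed
    finally have q_bound: "3 * s * (1 + 3 * s) * q \<le> 1 / 4" .
    have "3 * s * (1 + 3 * s) * (a\<^sup>2 * L\<^sup>2) \<le> 3 * s * (1 + 3 * s) * (q * (1 - s)\<^sup>2)"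
      using aL s by (intro mult_left_mono) auto
    also have "\<dots> = (3 * s * (1 + 3 * s) * q) * (1 - s)\<^sup>2"
      by simp
    also have "\<dots> \<le> 1 / 4 * (1 - s)\<^sup>2"
      using q_bound by (rule mult_right_mono) simp
    finally show ?thesis
      by (simp add: s_def mult.assoc)
  qed simp
qed

lemma finite_perm_space: "finite (perm_space m t :: (nat \<Rightarrow> 'n::finite \<Rightarrow> nat \<Rightarrow> nat) set)"
  unfolding perm_space_def by (intro finite_PiE finite_permutations) auto

lemma perm_space_nonempty: "(perm_space m t :: (nat \<Rightarrow> 'n::finite \<Rightarrow> nat \<Rightarrow> nat) set) \<noteq> {}"
  unfolding perm_space_def by (auto simp: PiE_eq_empty_iff intro: permutes_id)

lemma perm_space_permutes: "w \<in> perm_space m t \<Longrightarrow> w t j permutes {..<m}"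
  unfolding perm_space_def by (auto simp: PiE_iff)

lemma perm_space_entry_less: "w \<in> perm_space m t \<Longrightarrow> r < m \<Longrightarrow> w t j r < m"
  using permutes_in_image[of "w t j" "{..<m}" r] perm_space_permutes[of w m t j] by simp

lemma perm_space_update:
  assumes "w \<in> perm_space m t" "\<sigma> permutes {..<m}"
  shows "w(t := (w t)(j := \<sigma>)) \<in> perm_space m t"
  using assms unfolding perm_space_def by (auto simp: PiE_iff extensional_def)

text \<open>Composing agent \<open>j\<close>'s epoch-\<open>t\<close> permutation with the transposition of \<open>a\<close> and \<open>b\<close>
  maps the histories with \<open>\<pi>\<^sup>j\<^sub>r = a\<close> injectively to those with \<open>\<pi>\<^sup>j\<^sub>r = b\<close>.\<close>
lemma card_perm_space_entry_le:
  fixes j :: "'n::finite"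
  assumes a: "a < m" and b: "b < m"
  shows "card {w \<in> (perm_space m t :: (nat \<Rightarrow> 'n \<Rightarrow> nat \<Rightarrow> nat) set). w t j r = a}
    \<le> card {w \<in> (perm_space m t :: (nat \<Rightarrow> 'n \<Rightarrow> nat \<Rightarrow> nat) set). w t j r = b}"
proof (rule card_inj_on_le)
  define \<phi> :: "(nat \<Rightarrow> 'n \<Rightarrow> nat \<Rightarrow> nat) \<Rightarrow> _"
    where "\<phi> w = w(t := (w t)(j := Transposition.transpose a b \<circ> w t j))" for w
  have "\<phi> (\<phi> w) = w" for w
    unfolding \<phi>_def
    by (simp only: fun_upd_same fun_upd_upd comp_assoc[symmetric] transpose_comp_involutory
        id_comp fun_upd_triv)
  then show "inj_on \<phi> {w \<in> perm_space m t. w t j r = a}"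
    by (rule inj_on_inverseI[where g = \<phi>])
  show "\<phi> ` {w \<in> perm_space m t. w t j r = a} \<subseteq> {w \<in> perm_space m t. w t j r = b}"
  proof (rule image_subsetI)
    fix w
    assume w: "w \<in> {w \<in> perm_space m t. w t j r = a}"
    then have "Transposition.transpose a b \<circ> w t j permutes {..<m}"
      using a b by (intro permutes_compose permutes_swap_id perm_space_permutes) auto
    then show "\<phi> w \<in> {w \<in> perm_space m t. w t j r = b}"
      using w unfolding \<phi>_def by (auto intro: perm_space_update)
  qed
qed (rule finite_subset[OF _ finite_perm_space], auto)

lemma Exp_eq_sum:
  "Exp m t X = (\<Sum>w\<in>(perm_space m t :: (nat \<Rightarrow> 'n::finite \<Rightarrow> nat \<Rightarrow> nat) set). X w)
    / real (card (perm_space m t :: (nat \<Rightarrow> 'n \<Rightarrow> nat \<Rightarrow> nat) set))"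
  unfolding Exp_def by (rule integral_pmf_of_set[OF perm_space_nonempty finite_perm_space])

lemma Exp_mono:
  fixes X Y :: "(nat \<Rightarrow> 'n::finite \<Rightarrow> nat \<Rightarrow> nat) \<Rightarrow> real"
  assumes "\<And>w. w \<in> perm_space m t \<Longrightarrow> X w \<le> Y w"
  shows "Exp m t X \<le> Exp m t Y"
  unfolding Exp_eq_sum using assms by (intro divide_right_mono sum_mono) auto

lemma Exp_add:
  fixes X Y :: "(nat \<Rightarrow> 'n::finite \<Rightarrow> nat \<Rightarrow> nat) \<Rightarrow> real"
  shows "Exp m t (\<lambda>w. X w + Y w) = Exp m t X + Exp m t Y"
  unfolding Exp_eq_sum by (simp add: sum.distrib add_divide_distrib)

lemma Exp_sum:
  fixes X :: "'b \<Rightarrow> (nat \<Rightarrow> 'n::finite \<Rightarrow> nat \<Rightarrow> nat) \<Rightarrow> real"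
  shows "Exp m t (\<lambda>w. \<Sum>i\<in>A. X i w) = (\<Sum>i\<in>A. Exp m t (X i))"
  unfolding Exp_eq_sum by (subst sum.swap) (simp add: sum_divide_distrib)

lemma Exp_mult_left:
  fixes X :: "(nat \<Rightarrow> 'n::finite \<Rightarrow> nat \<Rightarrow> nat) \<Rightarrow> real"
  shows "Exp m t (\<lambda>w. c * X w) = c * Exp m t X"
  unfolding Exp_eq_sum by (simp add: sum_distrib_left)

lemma Exp_divide:
  fixes X :: "(nat \<Rightarrow> 'n::finite \<Rightarrow> nat \<Rightarrow> nat) \<Rightarrow> real"
  shows "Exp m t (\<lambda>w. X w / c) = Exp m t X / c"
  unfolding Exp_eq_sum by (simp add: sum_divide_distrib[symmetric])

lemma Exp_perm_entry:
  fixes F :: "nat \<Rightarrow> real" and j :: "'n::finite"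
  assumes r: "r < m"
  shows "Exp m t (\<lambda>w :: nat \<Rightarrow> 'n \<Rightarrow> nat \<Rightarrow> nat. F (w t j r)) = (\<Sum>l<m. F l) / real m"
proof -
  define S where "S = (perm_space m t :: (nat \<Rightarrow> 'n \<Rightarrow> nat \<Rightarrow> nat) set)"
  define k where "k = card {w \<in> S. w t j r = 0}"
  have card_fibre: "card {w \<in> S. w t j r = l} = k" if "l < m" for l
    using card_perm_space_entry_le[of l m 0 t j r] card_perm_space_entry_le[of 0 m l t j r] that r
    unfolding k_def S_def by simp
  have sum_fibres: "(\<Sum>w\<in>S. H (w t j r)) = real k * (\<Sum>l<m. H l)" for H :: "nat \<Rightarrow> real"
  proof -
    have "(\<lambda>w. w t j r) ` S \<subseteq> {..<m}"
      using perm_space_entry_less[OF _ r] by (auto simp: S_def)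
    then have "(\<Sum>w\<in>S. H (w t j r)) = (\<Sum>l<m. \<Sum>w\<in>{w \<in> S. w t j r = l}. H (w t j r))"
      by (intro sum.group[symmetric]) (simp_all add: S_def finite_perm_space)
    also have "\<dots> = real k * (\<Sum>l<m. H l)"
      by (simp add: card_fibre sum_distrib_left)
    finally show ?thesis .
  qed
  have "real (card S) = real k * real m"
    using sum_fibres[of "\<lambda>_. 1"] by simp
  moreover have "card S \<noteq> 0"
    by (simp add: S_def card_gt_0_iff finite_perm_space perm_space_nonempty)
  ultimately have "k \<noteq> 0"
    by (metis mult_eq_0_iff of_nat_eq_0_iff)
  then show ?thesis
    using sum_fibres[of F] \<open>real (card S) = real k * real m\<close>
    unfolding Exp_eq_sum S_def[symmetric] by simp
qed

lemma Exp_sum_norm_sq_gradients: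
  fixes g :: "'n::finite \<Rightarrow> nat \<Rightarrow> 'a \<Rightarrow> 'a::real_normed_vector"
  assumes "r < m"
  shows "Exp m t (\<lambda>w. \<Sum>i\<in>UNIV. (norm (g i (w t i r) xs))\<^sup>2) / real CARD('n) = sigma_star_sq g m xs"
proof -
  have "Exp m t (\<lambda>w. (norm (g i (w t i r) xs))\<^sup>2) = (\<Sum>l<m. (norm (g i l xs))\<^sup>2) / real m" for i
    by (rule Exp_perm_entry[OF assms])
  then show ?thesis
    by (simp add: Exp_sum sigma_star_sq_def sum_divide_distrib[symmetric] field_simps)
qed

lemma Exp_shuffle_breg_le_sigma_shuffle_sq:
  assumes "r < m"
  shows "Exp m t (\<lambda>w. shuffle_breg f g xs (\<alpha> t) (w t) r) \<le> sigma_shuffle_sq f g m xs \<alpha> t"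
  unfolding sigma_shuffle_sq_def using assms by (intro Max_ge) auto

theorem lemma7:
  fixes W :: "real ^'n::finite ^'n"
    and f :: "'n \<Rightarrow> nat \<Rightarrow> 'a::euclidean_space \<Rightarrow> real"
    and g :: "'n \<Rightarrow> nat \<Rightarrow> 'a \<Rightarrow> 'a"
    and m :: nat and \<mu> L :: real
    and x0 :: "'n \<Rightarrow> 'a" and xs :: 'a and \<alpha> :: "nat \<Rightarrow> real"
  assumes m_pos: "1 \<le> m"
    and W: "mixing_matrix W"
    and grad: "\<And>i l x. l < m \<Longrightarrow> (f i l has_derivative (\<lambda>h. inner (g i l x) h)) (at x)"
    and sconv: "\<And>i l. l < m \<Longrightarrow> strongly_convex_on \<mu> (f i l)"
    and lip: "\<And>i l. l < m \<Longrightarrow> L-lipschitz_on UNIV (g i l)"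
    and mu_pos: "0 < \<mu>" and mu_le_L: "\<mu> \<le> L"
    and xs_min: "\<And>y. (1 / real CARD('n)) * (\<Sum>i\<in>UNIV. (1 / real m) * (\<Sum>l<m. f i l xs))
                     \<le> (1 / real CARD('n)) * (\<Sum>i\<in>UNIV. (1 / real m) * (\<Sum>l<m. f i l y))"
    and alpha_pos: "\<And>t. 0 < \<alpha> t"
    and alpha_le: "\<And>t. rho_w W \<noteq> 0 \<Longrightarrow>
        \<alpha> t \<le> sqrt ((2 - (rho_w W)\<^sup>2) / (24 * (rho_w W)\<^sup>2 * (5 - (rho_w W)\<^sup>2))) * (1 - (rho_w W)\<^sup>2) / L"
    and ell: "r < m"
  shows "Exp m t (\<lambda>\<omega>. consensus_err (drr_iter W g m \<alpha> x0 \<omega> t (Suc r)))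
     \<le> (1 + (rho_w W)\<^sup>2) / 2 * Exp m t (\<lambda>\<omega>. consensus_err (drr_iter W g m \<alpha> x0 \<omega> t r))
       + 30 * (\<alpha> t)\<^sup>2 * real CARD('n) * L\<^sup>2 / (1 - (rho_w W)\<^sup>2)
           * Exp m t (\<lambda>\<omega>. (norm (agent_avg (drr_iter W g m \<alpha> x0 \<omega> t r) - xbar_star g xs (\<alpha> t) (\<omega> t) r))\<^sup>2)
       + 15 * real CARD('n) * (rho_w W)\<^sup>2 * (\<alpha> t)\<^sup>2 / (1 - (rho_w W)\<^sup>2)
           * (sigma_star_sq g m xs + 2 * L * sigma_shuffle_sq f g m xs \<alpha> t)"
proof -
  define c where "c = 15 * real CARD('n) * (rho_w W)\<^sup>2 * (\<alpha> t)\<^sup>2 / (1 - (rho_w W)\<^sup>2)"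
  have L: "0 < L"
    using mu_pos mu_le_L by simp
  note rho = drr_stepsize_condition[where a = "\<alpha> t", OF W alpha_pos L alpha_le]
  have "(rho_w W)\<^sup>2 < 1"
    using rho(1) rho_w_nonneg[of W] by (simp add: power_less_one_iff)
  then have "c \<ge> 0"
    by (simp add: c_def)
  have "Exp m t (\<lambda>\<omega>. consensus_err (drr_iter W g m \<alpha> x0 \<omega> t (Suc r)))
      \<le> Exp m t (\<lambda>\<omega>. (1 + (rho_w W)\<^sup>2) / 2 * consensus_err (drr_iter W g m \<alpha> x0 \<omega> t r)
        + 30 * (\<alpha> t)\<^sup>2 * real CARD('n) * L\<^sup>2 / (1 - (rho_w W)\<^sup>2)
          * (norm (agent_avg (drr_iter W g m \<alpha> x0 \<omega> t r) - xbar_star g xs (\<alpha> t) (\<omega> t) r))\<^sup>2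
        + c * ((\<Sum>i\<in>UNIV. (norm (g i (\<omega> t i r) xs))\<^sup>2) / real CARD('n)
          + 2 * L * shuffle_breg f g xs (\<alpha> t) (\<omega> t) r))"
    (is "Exp m t ?lhs \<le> Exp m t ?rhs")
  proof (rule Exp_mono)
    fix \<omega> :: "nat \<Rightarrow> 'n \<Rightarrow> nat \<Rightarrow> nat"
    assume "\<omega> \<in> perm_space m t"
    then have idx: "\<omega> t j r < m" for j
      by (rule perm_space_entry_less[OF _ ell])
    have "(f j (\<omega> t j r) has_derivative (\<lambda>h. inner (g j (\<omega> t j r) x) h)) (at x)"
      and "convex_on UNIV (f j (\<omega> t j r))"
      and "L-lipschitz_on UNIV (g j (\<omega> t j r))" for j x
      using grad[OF idx] strongly_convex_on_imp_convex_on[OF sconv[OF idx]] lip[OF idx] mu_pos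
      by simp_all
    then show "?lhs \<omega> \<le> ?rhs \<omega>"
      unfolding drr_iter_def drr_inner.simps c_def
      by (rule consensus_err_drr_step_bound[OF W _ _ _ L rho])
  qed
  also have "\<dots> \<le> (1 + (rho_w W)\<^sup>2) / 2 * Exp m t (\<lambda>\<omega>. consensus_err (drr_iter W g m \<alpha> x0 \<omega> t r))
       + 30 * (\<alpha> t)\<^sup>2 * real CARD('n) * L\<^sup>2 / (1 - (rho_w W)\<^sup>2)
           * Exp m t (\<lambda>\<omega>. (norm (agent_avg (drr_iter W g m \<alpha> x0 \<omega> t r) - xbar_star g xs (\<alpha> t) (\<omega> t) r))\<^sup>2)
       + c * (sigma_star_sq g m xs + 2 * L * sigma_shuffle_sq f g m xs \<alpha> t)"
    using Exp_shuffle_breg_le_sigma_shuffle_sq[OF ell, of t f g xs \<alpha>] \<open>c \<ge> 0\<close> L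
    by (simp add: Exp_add Exp_mult_left Exp_divide Exp_sum_norm_sq_gradients[OF ell])
      (intro mult_left_mono add_left_mono; simp)
  finally show ?thesis
    unfolding c_def .
qed

end
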